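(* Let $G$ be a connected graph. (1) If $\gamma_P(G) = \gamma(G)$, then $\gamma_P(G \Box P_n) = \gamma(G)$ for every path $P_n$ with $n\ge 1$ vertices. (2) If $\gamma_P(G) = Z(G)$ and $H$ is a connected graph with $\gamma(H) = 1$, then $\gamma_P(G \Box H) = Z(G)$. (3) If $H$ is a connected graph with $v_s(G) = \gamma(G)$ and $v_s(H) = Z(H)$, then $\gamma_P(G \Box H) = \gamma(G)Z(H)$.
   Context: $\gamma(G)$ is the domination number. Zero forcing: starting from an observed set, repeatedly any vertex that is the only unobserved neighbor of some observed vertex becomes observed; $Z(G)$ is the minimum size of a set that eventually observes all vertices. Power domination: for $S\subseteq V(G)$, first all vertices of $S$ and their neighbors are observed, then the zero forcing rule is applied repeatedly; $\gamma_P(G)$ is the minimum size of an $S$ that eventually observes all vertices. A strong support vertex is a vertex adjacent to at least two leaves; $v_s(G)$ is the number of strong support vertices of $G$. $P_n$ is the path on $n$ vertices. $G\Box H$ is the Cartesian product: vertex set $V(G)\times V(H)$, with $(g_1,h_1)\sim(g_2,h_2)$ iff ($g_1=g_2$ and $h_1h_2\in E(H)$) or ($h_1=h_2$ and $g_1g_2\in E(G)$). *)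

theory Defs
  imports Main
begin

definition graph :: "'a set \<Rightarrow> ('a \<Rightarrow> 'a \<Rightarrow> bool) \<Rightarrow> bool" where
  "graph V E \<longleftrightarrow> finite V \<and> (\<forall>x y. E x y \<longrightarrow> x \<in> V \<and> y \<in> V)
     \<and> (\<forall>x y. E x y \<longrightarrow> E y x) \<and> (\<forall>x. \<not> E x x)"

definition connected_graph :: "'a set \<Rightarrow> ('a \<Rightarrow> 'a \<Rightarrow> bool) \<Rightarrow> bool" where
  "connected_graph V E \<longleftrightarrow> graph V E \<and> V \<noteq> {} \<and> (\<forall>x\<in>V. \<forall>y\<in>V. E\<^sup>*\<^sup>* x y)"

definition dominating_set :: "'a set \<Rightarrow> ('a \<Rightarrow> 'a \<Rightarrow> bool) \<Rightarrow> 'a set \<Rightarrow> bool" where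
  "dominating_set V E S \<longleftrightarrow> S \<subseteq> V \<and> (\<forall>v\<in>V. v \<in> S \<or> (\<exists>u\<in>S. E u v))"

definition domination_number :: "'a set \<Rightarrow> ('a \<Rightarrow> 'a \<Rightarrow> bool) \<Rightarrow> nat" where
  "domination_number V E = (LEAST k. \<exists>S. dominating_set V E S \<and> card S = k)"

inductive_set zf_closure :: "'a set \<Rightarrow> ('a \<Rightarrow> 'a \<Rightarrow> bool) \<Rightarrow> 'a set \<Rightarrow> 'a set"
  for V E S where
  base: "v \<in> S \<Longrightarrow> v \<in> zf_closure V E S"
| force: "u \<in> zf_closure V E S \<Longrightarrow> E u v \<Longrightarrow>
     (\<forall>w. E u w \<and> w \<noteq> v \<longrightarrow> w \<in> zf_closure V E S) \<Longrightarrow> v \<in> zf_closure V E S"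

definition zero_forcing_set :: "'a set \<Rightarrow> ('a \<Rightarrow> 'a \<Rightarrow> bool) \<Rightarrow> 'a set \<Rightarrow> bool" where
  "zero_forcing_set V E S \<longleftrightarrow> S \<subseteq> V \<and> zf_closure V E S = V"

definition zero_forcing_number :: "'a set \<Rightarrow> ('a \<Rightarrow> 'a \<Rightarrow> bool) \<Rightarrow> nat" where
  "zero_forcing_number V E = (LEAST k. \<exists>S. zero_forcing_set V E S \<and> card S = k)"

definition closed_nbhd_set :: "'a set \<Rightarrow> ('a \<Rightarrow> 'a \<Rightarrow> bool) \<Rightarrow> 'a set \<Rightarrow> 'a set" where
  "closed_nbhd_set V E S = S \<union> {v \<in> V. \<exists>u\<in>S. E u v}"

definition power_dominating_set :: "'a set \<Rightarrow> ('a \<Rightarrow> 'a \<Rightarrow> bool) \<Rightarrow> 'a set \<Rightarrow> bool" where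
  "power_dominating_set V E S \<longleftrightarrow> S \<subseteq> V \<and> zf_closure V E (closed_nbhd_set V E S) = V"

definition power_domination_number :: "'a set \<Rightarrow> ('a \<Rightarrow> 'a \<Rightarrow> bool) \<Rightarrow> nat" where
  "power_domination_number V E = (LEAST k. \<exists>S. power_dominating_set V E S \<and> card S = k)"

definition degree :: "'a set \<Rightarrow> ('a \<Rightarrow> 'a \<Rightarrow> bool) \<Rightarrow> 'a \<Rightarrow> nat" where
  "degree V E v = card {u \<in> V. E v u}"

definition leaf :: "'a set \<Rightarrow> ('a \<Rightarrow> 'a \<Rightarrow> bool) \<Rightarrow> 'a \<Rightarrow> bool" where
  "leaf V E v \<longleftrightarrow> v \<in> V \<and> degree V E v = 1"

definition strong_support_vertex :: "'a set \<Rightarrow> ('a \<Rightarrow> 'a \<Rightarrow> bool) \<Rightarrow> 'a \<Rightarrow> bool" where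
  "strong_support_vertex V E v \<longleftrightarrow> v \<in> V \<and> card {u \<in> V. E v u \<and> leaf V E u} \<ge> 2"

definition num_strong_support :: "'a set \<Rightarrow> ('a \<Rightarrow> 'a \<Rightarrow> bool) \<Rightarrow> nat" where
  "num_strong_support V E = card {v \<in> V. strong_support_vertex V E v}"

definition cart_V :: "'a set \<Rightarrow> 'b set \<Rightarrow> ('a \<times> 'b) set" where
  "cart_V V W = V \<times> W"

definition cart_E :: "('a \<Rightarrow> 'a \<Rightarrow> bool) \<Rightarrow> ('b \<Rightarrow> 'b \<Rightarrow> bool) \<Rightarrow> ('a \<times> 'b) \<Rightarrow> ('a \<times> 'b) \<Rightarrow> bool" where
  "cart_E E F p q \<longleftrightarrow> (fst p = fst q \<and> F (snd p) (snd q)) \<or> (snd p = snd q \<and> E (fst p) (fst q))"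

definition path_V :: "nat \<Rightarrow> nat set" where
  "path_V n = {0..<n}"

definition path_E :: "nat \<Rightarrow> nat \<Rightarrow> nat \<Rightarrow> bool" where
  "path_E n i j \<longleftrightarrow> i < n \<and> j < n \<and> (i + 1 = j \<or> j + 1 = i)"

end

theory Submission
  imports Defs
begin

text \<open>
  If D dominates G and Z is a zero forcing set of H, then D \<times> Z power dominates G \<box> H:
  its closed neighbourhood contains V(G) \<times> Z, and the forcing chains of Z in H then force
  whole G-fibres. By the symmetry G \<box> H \<cong> H \<box> G the same holds for Z \<times> D. Conversely,
  projecting onto G turns every power dominating set of G \<box> H into one of G, since a forcing
  step in the product projects to a forcing step in G or to an already observed vertex. Finally,
  for strong support vertices x, y with leaf sets L_x, L_y the set L_x \<times> L_y is a fort of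
  G \<box> H, so every power dominating set meets each of the pairwise disjoint stars
  ({x} \<union> L_x) \<times> ({y} \<union> L_y), whence v_s(G) v_s(H) \<le> \<gamma>_P(G \<box> H). The three claims follow by
  matching these bounds, using Z(P_n) = 1.
\<close>

lemma graph_edgeD:
  assumes "graph V E" and "E x y"
  shows "x \<in> V" and "y \<in> V" and "E y x"
  using assms unfolding graph_def by blast+

text \<open>\<open>cart_E E F\<close> also joins pairs outside \<open>cart_V V W\<close>, so the product is not a \<open>graph\<close>;
  only edges leaving the carrier are excluded.\<close>

lemma cart_edge_closed:
  assumes "graph V E" and "graph W F" and "u \<in> cart_V V W" and "cart_E E F u v"
  shows "v \<in> cart_V V W"
  using assms unfolding cart_V_def cart_E_def graph_def by (cases u; cases v) auto

lemma closed_nbhd_set_subset: "S \<subseteq> V \<Longrightarrow> closed_nbhd_set V E S \<subseteq> V"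
  unfolding closed_nbhd_set_def by blast

lemma dominating_set_carrier: "dominating_set V E V"
  unfolding dominating_set_def by blast

lemma Least_card_le: "P S \<Longrightarrow> (LEAST k. \<exists>S. P S \<and> card S = k) \<le> card S"
  by (rule Least_le) blast

lemma Least_card_witness:
  assumes "P S"
  obtains T where "P T" and "card T = (LEAST k. \<exists>S. P S \<and> card S = k)"
  using LeastI_ex[of "\<lambda>k. \<exists>S. P S \<and> card S = k"] assms by blast

lemma zf_closure_mono:
  assumes "X \<subseteq> Y"
  shows "zf_closure V E X \<subseteq> zf_closure V E Y"
proof
  fix v assume "v \<in> zf_closure V E X"
  then show "v \<in> zf_closure V E Y"
    by induction (use assms in \<open>blast intro: zf_closure.intros\<close>)+
qed

lemma zf_closure_subset:
  assumes "X \<subseteq> V" and "\<And>u v. u \<in> V \<Longrightarrow> E u v \<Longrightarrow> v \<in> V"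
  shows "zf_closure V E X \<subseteq> V"
proof
  fix v assume "v \<in> zf_closure V E X"
  then show "v \<in> V"
    by induction (use assms in blast)+
qed

lemma zero_forcing_set_carrier:
  assumes "graph V E"
  shows "zero_forcing_set V E V"
proof -
  have "zf_closure V E V \<subseteq> V"
    by (rule zf_closure_subset) (use graph_edgeD(2)[OF assms] in blast)+
  then show ?thesis unfolding zero_forcing_set_def by (blast intro: zf_closure.base)
qed

lemma zf_closure_disjoint_fort:
  assumes "X \<inter> Q = {}"
    and "\<And>p u. p \<in> Q \<Longrightarrow> u \<notin> Q \<Longrightarrow> E u p \<Longrightarrow> \<exists>w. E u w \<and> w \<noteq> p \<and> w \<in> Q"
  shows "zf_closure V E X \<inter> Q = {}"
proof -
  have "v \<notin> Q" if "v \<in> zf_closure V E X" for v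
    using that by induction (use assms in blast)+
  then show ?thesis by blast
qed

lemma zf_closure_image_subset:
  assumes "surj f" and "\<And>u v. E' (f u) (f v) \<longleftrightarrow> E u v"
  shows "f ` zf_closure V E X \<subseteq> zf_closure V' E' (f ` X)"
proof
  fix y assume "y \<in> f ` zf_closure V E X"
  then obtain v where "v \<in> zf_closure V E X" and "y = f v" by blast
  then show "y \<in> zf_closure V' E' (f ` X)"
  proof (induction arbitrary: y)
    case (base v) then show ?case by (blast intro: zf_closure.base)
  next
    case (force u v)
    have "\<forall>w'. E' (f u) w' \<and> w' \<noteq> f v \<longrightarrow> w' \<in> zf_closure V' E' (f ` X)"
      using force.IH(2) assms by (metis surjD)
    with force.IH(1) force.hyps(2) show ?case
      unfolding \<open>y = f v\<close> by (blast intro: zf_closure.force assms(2)[THEN iffD2])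
  qed
qed

lemma zf_closure_image:
  assumes "bij f" and "\<And>u v. E' (f u) (f v) \<longleftrightarrow> E u v"
  shows "zf_closure V' E' (f ` X) = f ` zf_closure V E X"
proof
  show "f ` zf_closure V E X \<subseteq> zf_closure V' E' (f ` X)"
    using zf_closure_image_subset assms bij_is_surj by metis
  have "E (inv f x) (inv f y) \<longleftrightarrow> E' x y" for x y
    using assms by (metis bij_is_surj surj_f_inv_f)
  then have inv: "inv f ` zf_closure V' E' (f ` X) \<subseteq> zf_closure V E X"
    using zf_closure_image_subset[where f = "inv f" and E = E' and E' = E and X = "f ` X"] assms(1)
    by (simp add: bij_imp_bij_inv bij_is_surj bij_is_inj image_inv_f_f)
  show "zf_closure V' E' (f ` X) \<subseteq> f ` zf_closure V E X"
  proof
    fix y assume "y \<in> zf_closure V' E' (f ` X)"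
    then have "inv f y \<in> zf_closure V E X" using inv by blast
    moreover have "y = f (inv f y)"
      using assms(1) by (simp add: bij_is_surj surj_f_inv_f)
    ultimately show "y \<in> f ` zf_closure V E X" by blast
  qed
qed

lemma closed_nbhd_set_image:
  assumes "inj f" and "\<And>u v. E' (f u) (f v) \<longleftrightarrow> E u v"
  shows "closed_nbhd_set (f ` V) E' (f ` S) = f ` closed_nbhd_set V E S"
  using assms unfolding closed_nbhd_set_def by auto

lemma power_dominating_set_image:
  assumes "bij f" and "\<And>u v. E' (f u) (f v) \<longleftrightarrow> E u v"
  shows "power_dominating_set (f ` V) E' (f ` S) \<longleftrightarrow> power_dominating_set V E S"
proof -
  have "inj f" using assms(1) by (rule bij_is_inj)
  then show ?thesis
    unfolding power_dominating_set_def
    by (simp add: closed_nbhd_set_image[where E = E and E' = E', OF \<open>inj f\<close> assms(2)]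
        zf_closure_image[where E = E and E' = E' and V = V and V' = "f ` V", OF assms]
        inj_image_subset_iff inj_image_eq_iff)
qed

lemma cart_E_swap: "cart_E F E (prod.swap p) (prod.swap q) \<longleftrightarrow> cart_E E F p q"
  unfolding cart_E_def by auto

lemma power_dominating_set_cart_swap:
  "power_dominating_set (cart_V W V) (cart_E F E) (prod.swap ` S)
     \<longleftrightarrow> power_dominating_set (cart_V V W) (cart_E E F) S"
  using power_dominating_set_image[where E = "cart_E E F" and E' = "cart_E F E",
      OF bij_swap cart_E_swap, of "cart_V V W"]
  by (simp add: cart_V_def product_swap)

lemma power_domination_number_cart_commute:
  "power_domination_number (cart_V W V) (cart_E F E)
     = power_domination_number (cart_V V W) (cart_E E F)"
proof -
  have "(\<exists>S. power_dominating_set (cart_V W V) (cart_E F E) S \<and> card S = k)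
      \<longleftrightarrow> (\<exists>S. power_dominating_set (cart_V V W) (cart_E E F) S \<and> card S = k)" for k
    by (metis power_dominating_set_cart_swap card_image image_comp inj_swap swap_comp_swap image_id)
  then show ?thesis unfolding power_domination_number_def by simp
qed

section \<open>Power dominating sets of the form D \<times> Z\<close>

lemma zf_closure_cart_fibres:
  assumes "\<And>v a. v \<in> V \<Longrightarrow> E v a \<Longrightarrow> a \<in> V"
    and "V \<times> T \<subseteq> zf_closure U (cart_E E F) X"
  shows "V \<times> zf_closure W F T \<subseteq> zf_closure U (cart_E E F) X"
proof -
  let ?C = "zf_closure U (cart_E E F) X"
  have "\<forall>v\<in>V. (v, h) \<in> ?C" if "h \<in> zf_closure W F T" for h
    using that
  proof induction
    case (base h) then show ?case using assms(2) by blast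
  next
    case (force u h)
    show ?case
    proof
      fix v assume "v \<in> V"
      have others: "w \<in> ?C" if "cart_E E F (v, u) w" and "w \<noteq> (v, h)" for w
      proof (cases "fst w = v \<and> F u (snd w)")
        case True
        then have "snd w \<noteq> h" using that by (metis prod.collapse)
        then show ?thesis using force.IH(2) \<open>v \<in> V\<close> True by (metis prod.collapse)
      next
        case False
        then have "snd w = u" and "E v (fst w)" using that unfolding cart_E_def by auto
        then show ?thesis using force.IH(1) assms(1) \<open>v \<in> V\<close> by (metis prod.collapse)
      qed
      have "(v, u) \<in> ?C" using force.IH(1) \<open>v \<in> V\<close> by blast
      moreover have "cart_E E F (v, u) (v, h)"
        using force.hyps(2) unfolding cart_E_def by simp
      ultimately show "(v, h) \<in> ?C"
        by (rule zf_closure.force) (use others in blast)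
    qed
  qed
  then show ?thesis by blast
qed

lemma power_dominating_set_cart_dominating_zero_forcing:
  assumes "graph V E" and "graph W F"
    and D: "dominating_set V E D" and Z: "zero_forcing_set W F Z"
  shows "power_dominating_set (cart_V V W) (cart_E E F) (D \<times> Z)"
proof -
  let ?X = "closed_nbhd_set (cart_V V W) (cart_E E F) (D \<times> Z)"
  let ?C = "zf_closure (cart_V V W) (cart_E E F) ?X"
  have DZ: "D \<times> Z \<subseteq> cart_V V W"
    using D Z unfolding dominating_set_def zero_forcing_set_def cart_V_def by blast
  have "V \<times> Z \<subseteq> ?X"
  proof
    fix p assume "p \<in> V \<times> Z"
    then obtain v z where p: "p = (v, z)" "v \<in> V" "z \<in> Z" by blast
    then have "(v, z) \<in> cart_V V W"
      using Z unfolding zero_forcing_set_def cart_V_def by blast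
    have "v \<in> D \<or> (\<exists>u\<in>D. E u v)"
      using D p unfolding dominating_set_def by blast
    then show "p \<in> ?X"
    proof
      assume "v \<in> D"
      then show ?thesis using p unfolding closed_nbhd_set_def by blast
    next
      assume "\<exists>u\<in>D. E u v"
      then obtain u where "u \<in> D" and "cart_E E F (u, z) (v, z)"
        unfolding cart_E_def by auto
      then show ?thesis
        using p \<open>(v, z) \<in> cart_V V W\<close> unfolding closed_nbhd_set_def by blast
    qed
  qed
  then have "V \<times> zf_closure W F Z \<subseteq> ?C"
    by (intro zf_closure_cart_fibres) (use graph_edgeD(2)[OF assms(1)] in \<open>auto intro: zf_closure.base\<close>)
  then have "cart_V V W \<subseteq> ?C"
    using Z unfolding zero_forcing_set_def cart_V_def by simp
  moreover have "?C \<subseteq> cart_V V W"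
    using closed_nbhd_set_subset[OF DZ] cart_edge_closed[OF assms(1,2)] by (rule zf_closure_subset)
  ultimately show ?thesis using DZ unfolding power_dominating_set_def by blast
qed

lemma power_domination_number_cart_le_dom_zf:
  assumes "graph V E" and "graph W F"
  shows "power_domination_number (cart_V V W) (cart_E E F)
           \<le> domination_number V E * zero_forcing_number W F"
proof -
  obtain D where D: "dominating_set V E D" "card D = domination_number V E"
    using Least_card_witness[of "dominating_set V E", OF dominating_set_carrier]
    unfolding domination_number_def by blast
  obtain Z where Z: "zero_forcing_set W F Z" "card Z = zero_forcing_number W F"
    using Least_card_witness[of "zero_forcing_set W F", OF zero_forcing_set_carrier[OF assms(2)]]
    unfolding zero_forcing_number_def by blast
  have "power_domination_number (cart_V V W) (cart_E E F) \<le> card (D \<times> Z)"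
    unfolding power_domination_number_def
    by (rule Least_card_le, rule power_dominating_set_cart_dominating_zero_forcing[OF assms D(1) Z(1)])
  then show ?thesis using D(2) Z(2) by (simp add: card_cartesian_product)
qed

lemma power_domination_number_cart_le_zf_dom:
  assumes "graph V E" and "graph W F"
  shows "power_domination_number (cart_V V W) (cart_E E F)
           \<le> zero_forcing_number V E * domination_number W F"
proof -
  have "power_domination_number (cart_V V W) (cart_E E F)
      = power_domination_number (cart_V W V) (cart_E F E)"
    by (rule power_domination_number_cart_commute[symmetric])
  also have "\<dots> \<le> domination_number W F * zero_forcing_number V E"
    by (rule power_domination_number_cart_le_dom_zf[OF assms(2,1)])
  finally show ?thesis by (simp only: mult.commute)
qed

lemma path_graph: "graph (path_V n) (path_E n)"
  unfolding graph_def path_V_def path_E_def by auto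

lemma zero_forcing_set_path:
  assumes "1 \<le> n"
  shows "zero_forcing_set (path_V n) (path_E n) {0}"

proof -
  have path: "i \<in> zf_closure (path_V n) (path_E n) {0}" if "i < n" for i
    using that
  proof (induction i rule: less_induct)
    case (less i)
    show ?case
    proof (cases i)
      case 0 then show ?thesis by (blast intro: zf_closure.base)
    next
      case (Suc k)
      have others: "w \<in> zf_closure (path_V n) (path_E n) {0}" if "path_E n k w" and "w \<noteq> i" for w
      proof -
        have "w < i" and "w < n" using that Suc unfolding path_E_def by auto
        then show ?thesis by (rule less.IH)
      qed
      have "k \<in> zf_closure (path_V n) (path_E n) {0}" using less Suc by simp
      moreover have "path_E n k i" using less.prems Suc unfolding path_E_def by simp
      ultimately show ?thesis by (rule zf_closure.force) (use others in blast)
    qed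
  qed
  then have "path_V n \<subseteq> zf_closure (path_V n) (path_E n) {0}"
    unfolding path_V_def by (simp add: subset_iff)
  moreover have "zf_closure (path_V n) (path_E n) {0} \<subseteq> path_V n"
    by (rule zf_closure_subset) (use assms in \<open>auto simp: path_V_def path_E_def\<close>)
  moreover have "{0} \<subseteq> path_V n" using assms unfolding path_V_def by simp
  ultimately show ?thesis unfolding zero_forcing_set_def by blast
qed

lemma zero_forcing_number_path_le:
  assumes "1 \<le> n"
  shows "zero_forcing_number (path_V n) (path_E n) \<le> 1"
  using Least_card_le[of "zero_forcing_set (path_V n) (path_E n)", OF zero_forcing_set_path[OF assms]]
  unfolding zero_forcing_number_def by simp

section \<open>Projection onto a factor\<close>

lemma zf_closure_cart_fst:
  "fst ` zf_closure U (cart_E E F) X \<subseteq> zf_closure V E (fst ` X)"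
proof
  fix g assume "g \<in> fst ` zf_closure U (cart_E E F) X"
  then obtain p where "p \<in> zf_closure U (cart_E E F) X" and "g = fst p" by blast
  then show "g \<in> zf_closure V E (fst ` X)"
  proof (induction arbitrary: g)
    case (base p) then show ?case by (blast intro: zf_closure.base)
  next
    case (force u p)
    show ?case
    proof (cases "fst u = fst p")
      case True then show ?thesis using force.IH(1) force.prems by simp
    next
      case False
      then have "snd u = snd p" and edge: "E (fst u) (fst p)"
        using force.hyps(2) unfolding cart_E_def by auto
      have others: "a \<in> zf_closure V E (fst ` X)" if "E (fst u) a" and "a \<noteq> fst p" for a
      proof -
        have "cart_E E F u (a, snd u)" using that(1) unfolding cart_E_def by simp
        moreover have "(a, snd u) \<noteq> p" using that(2) by auto
        ultimately show ?thesis using force.IH(2) by fastforce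
      qed
      have "fst u \<in> zf_closure V E (fst ` X)" using force.IH(1) by simp
      then have "fst p \<in> zf_closure V E (fst ` X)"
        using edge by (rule zf_closure.force) (use others in blast)
      then show ?thesis using force.prems by simp
    qed
  qed
qed

lemma closed_nbhd_set_cart_fst:
  "fst ` closed_nbhd_set (cart_V V W) (cart_E E F) S \<subseteq> closed_nbhd_set V E (fst ` S)"
  unfolding closed_nbhd_set_def cart_V_def cart_E_def by force

lemma power_dominating_set_cart_fst:
  assumes "graph V E" and "W \<noteq> {}"
    and S: "power_dominating_set (cart_V V W) (cart_E E F) S"
  shows "power_dominating_set V E (fst ` S)"
proof -
  have "fst ` S \<subseteq> V" using S \<open>W \<noteq> {}\<close> unfolding power_dominating_set_def cart_V_def by auto
  have "V = fst ` zf_closure (cart_V V W) (cart_E E F) (closed_nbhd_set (cart_V V W) (cart_E E F) S)"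
    using S \<open>W \<noteq> {}\<close> unfolding power_dominating_set_def cart_V_def by simp
  also have "\<dots> \<subseteq> zf_closure V E (fst ` closed_nbhd_set (cart_V V W) (cart_E E F) S)"
    by (rule zf_closure_cart_fst)
  also have "\<dots> \<subseteq> zf_closure V E (closed_nbhd_set V E (fst ` S))"
    by (rule zf_closure_mono[OF closed_nbhd_set_cart_fst])
  finally have "V \<subseteq> zf_closure V E (closed_nbhd_set V E (fst ` S))" .
  moreover have "zf_closure V E (closed_nbhd_set V E (fst ` S)) \<subseteq> V"
    using closed_nbhd_set_subset[OF \<open>fst ` S \<subseteq> V\<close>] graph_edgeD(2)[OF assms(1)]
    by (rule zf_closure_subset)
  ultimately show ?thesis
    using \<open>fst ` S \<subseteq> V\<close> unfolding power_dominating_set_def by blast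
qed

lemma power_domination_number_cart_witness:
  assumes "graph V E" and "graph W F"
  obtains S where "power_dominating_set (cart_V V W) (cart_E E F) S"
    and "card S = power_domination_number (cart_V V W) (cart_E E F)"
    and "finite S"
proof -
  have "power_dominating_set (cart_V V W) (cart_E E F) (V \<times> W)"
    using power_dominating_set_cart_dominating_zero_forcing[OF assms
        dominating_set_carrier zero_forcing_set_carrier[OF assms(2)]] .
  then obtain S where S: "power_dominating_set (cart_V V W) (cart_E E F) S"
    "card S = power_domination_number (cart_V V W) (cart_E E F)"
    using Least_card_witness[where P = "power_dominating_set (cart_V V W) (cart_E E F)"]
    unfolding power_domination_number_def by blast
  have "finite (V \<times> W)" using assms unfolding graph_def by simp
  then have "finite S"
    using S(1) finite_subset unfolding power_dominating_set_def cart_V_def by blast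
  with S show thesis by (rule that)
qed

lemma power_domination_number_le_cart:
  assumes "graph V E" and "graph W F" and "W \<noteq> {}"
  shows "power_domination_number V E \<le> power_domination_number (cart_V V W) (cart_E E F)"
proof -
  obtain S where S: "power_dominating_set (cart_V V W) (cart_E E F) S"
    "card S = power_domination_number (cart_V V W) (cart_E E F)" "finite S"
    using power_domination_number_cart_witness[OF assms(1,2)] .
  have "power_domination_number V E \<le> card (fst ` S)"
    unfolding power_domination_number_def
    by (rule Least_card_le, rule power_dominating_set_cart_fst[OF assms(1,3) S(1)])
  also have "\<dots> \<le> card S" using S(3) by (rule card_image_le)
  finally show ?thesis using S(2) by simp
qed

section \<open>Strong support vertices\<close>

definition leaf_neighbours :: "'a set \<Rightarrow> ('a \<Rightarrow> 'a \<Rightarrow> bool) \<Rightarrow> 'a \<Rightarrow> 'a set" where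
  "leaf_neighbours V E x = {u \<in> V. E x u \<and> leaf V E u}"

definition support_star :: "'a set \<Rightarrow> ('a \<Rightarrow> 'a \<Rightarrow> bool) \<Rightarrow> 'a \<Rightarrow> 'a set" where
  "support_star V E x = insert x (leaf_neighbours V E x)"

lemma leaf_neighbour_eq:
  assumes "graph V E" and "leaf V E z" and "E z x" and "E z y"
  shows "x = y"
proof -
  have "card {u \<in> V. E z u} = 1" using assms(2) unfolding leaf_def degree_def by blast
  moreover have "x \<in> {u \<in> V. E z u}" and "y \<in> {u \<in> V. E z u}"
    using graph_edgeD(2)[OF assms(1)] assms(3,4) by blast+
  ultimately show ?thesis by (metis card_1_singletonE singletonD)
qed

lemma strong_support_vertex_other_leaf:
  assumes "strong_support_vertex V E x"
  shows "\<exists>b\<in>leaf_neighbours V E x. b \<noteq> a"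
proof (rule ccontr)
  assume "\<not> ?thesis"
  then have "leaf_neighbours V E x \<subseteq> {a}" by blast
  then have "card (leaf_neighbours V E x) \<le> 1"
    using card_mono[of "{a}" "leaf_neighbours V E x"] by simp
  then show False
    using assms unfolding strong_support_vertex_def leaf_neighbours_def by simp
qed

lemma strong_support_vertex_not_leaf:
  assumes "graph V E" and "strong_support_vertex V E x"
  shows "\<not> leaf V E x"
proof
  assume "leaf V E x"
  obtain a where a: "a \<in> leaf_neighbours V E x"
    using strong_support_vertex_other_leaf[OF assms(2)] by blast
  obtain b where b: "b \<in> leaf_neighbours V E x" and "b \<noteq> a"
    using strong_support_vertex_other_leaf[OF assms(2)] by blast
  have "a = b"
    using leaf_neighbour_eq[OF assms(1) \<open>leaf V E x\<close>] a b unfolding leaf_neighbours_def by blast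
  with \<open>b \<noteq> a\<close> show False by simp
qed

lemma support_star_disjoint:
  assumes "graph V E" and "strong_support_vertex V E x" and "strong_support_vertex V E x'"
    and "z \<in> support_star V E x" and "z \<in> support_star V E x'"
  shows "x = x'"
  using assms(4,5) strong_support_vertex_not_leaf[OF assms(1,2)]
    strong_support_vertex_not_leaf[OF assms(1,3)]
    leaf_neighbour_eq[OF assms(1)] graph_edgeD(3)[OF assms(1)]
  unfolding support_star_def leaf_neighbours_def by blast

lemma leaf_neighbours_cart_neighbour:
  assumes "graph V E" and "graph W F"
    and p: "p \<in> leaf_neighbours V E x \<times> leaf_neighbours W F y" and "cart_E E F u p"
  shows "u = (x, snd p) \<or> u = (fst p, y)"
proof -
  have "leaf V E (fst p)" "E x (fst p)" "leaf W F (snd p)" "F y (snd p)"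
    using p unfolding leaf_neighbours_def by auto
  from \<open>cart_E E F u p\<close> consider "fst u = fst p" "F (snd u) (snd p)"
    | "snd u = snd p" "E (fst u) (fst p)"
    unfolding cart_E_def by blast
  then show ?thesis
  proof cases
    case 1
    then have "snd u = y"
      using leaf_neighbour_eq[OF assms(2) \<open>leaf W F (snd p)\<close>] graph_edgeD(3)[OF assms(2)]
        \<open>F y (snd p)\<close> by blast
    with 1 show ?thesis by (simp add: prod_eq_iff)
  next
    case 2
    then have "fst u = x"
      using leaf_neighbour_eq[OF assms(1) \<open>leaf V E (fst p)\<close>] graph_edgeD(3)[OF assms(1)]
        \<open>E x (fst p)\<close> by blast
    with 2 show ?thesis by (simp add: prod_eq_iff)
  qed
qed

lemma power_dominating_set_meets_support_stars:
  assumes gV: "graph V E" and gW: "graph W F"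
    and x: "strong_support_vertex V E x" and y: "strong_support_vertex W F y"
    and S: "power_dominating_set (cart_V V W) (cart_E E F) S"
  shows "S \<inter> support_star V E x \<times> support_star W F y \<noteq> {}"
proof
  assume miss: "S \<inter> support_star V E x \<times> support_star W F y = {}"
  let ?Q = "leaf_neighbours V E x \<times> leaf_neighbours W F y"
  let ?X = "closed_nbhd_set (cart_V V W) (cart_E E F) S"
  have "?X \<inter> ?Q = {}"
  proof -
    have "u \<in> support_star V E x \<times> support_star W F y" if "p \<in> ?Q" and "cart_E E F u p" for p u
      using leaf_neighbours_cart_neighbour[OF gV gW that] that(1)
      unfolding support_star_def by auto
    then show ?thesis using miss unfolding closed_nbhd_set_def support_star_def by blast
  qed
  moreover have "\<exists>w. cart_E E F u w \<and> w \<noteq> p \<and> w \<in> ?Q" if "p \<in> ?Q" and "cart_E E F u p" for p u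
    using leaf_neighbours_cart_neighbour[OF gV gW that]
  proof
    assume u: "u = (x, snd p)"
    obtain a where "a \<in> leaf_neighbours V E x" and "a \<noteq> fst p"
      using strong_support_vertex_other_leaf[OF x] by blast
    then have "cart_E E F u (a, snd p)" and "(a, snd p) \<noteq> p" and "(a, snd p) \<in> ?Q"
      using u that(1) unfolding cart_E_def leaf_neighbours_def by auto
    then show ?thesis by blast
  next
    assume u: "u = (fst p, y)"
    obtain b where "b \<in> leaf_neighbours W F y" and "b \<noteq> snd p"
      using strong_support_vertex_other_leaf[OF y] by blast
    then have "cart_E E F u (fst p, b)" and "(fst p, b) \<noteq> p" and "(fst p, b) \<in> ?Q"
      using u that(1) unfolding cart_E_def leaf_neighbours_def by auto
    then show ?thesis by blast
  qed
  ultimately have "zf_closure (cart_V V W) (cart_E E F) ?X \<inter> ?Q = {}"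
    by (rule zf_closure_disjoint_fort)
  moreover have "?Q \<subseteq> cart_V V W" and "?Q \<noteq> {}"
    using strong_support_vertex_other_leaf[OF x] strong_support_vertex_other_leaf[OF y]
    unfolding leaf_neighbours_def cart_V_def by blast+
  ultimately show False using S unfolding power_dominating_set_def by blast
qed

lemma num_strong_support_cart_le:
  assumes gV: "graph V E" and gW: "graph W F"
  shows "num_strong_support V E * num_strong_support W F
           \<le> power_domination_number (cart_V V W) (cart_E E F)"
proof -
  obtain S where S: "power_dominating_set (cart_V V W) (cart_E E F) S"
    "card S = power_domination_number (cart_V V W) (cart_E E F)" "finite S"
    using power_domination_number_cart_witness[OF gV gW] .
  let ?A = "{x \<in> V. strong_support_vertex V E x}"
  let ?B = "{y \<in> W. strong_support_vertex W F y}"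
  define pick where
    "pick = (\<lambda>(x, y). SOME p. p \<in> S \<inter> support_star V E x \<times> support_star W F y)"
  have pick: "pick (x, y) \<in> S \<inter> support_star V E x \<times> support_star W F y"
    if "(x, y) \<in> ?A \<times> ?B" for x y
  proof -
    have "S \<inter> support_star V E x \<times> support_star W F y \<noteq> {}"
      using power_dominating_set_meets_support_stars[OF gV gW _ _ S(1), of x y] that by simp
    then show ?thesis unfolding pick_def split_conv by (rule some_in_eq[THEN iffD2])
  qed
  have "inj_on pick (?A \<times> ?B)"
  proof (rule inj_onI)
    fix p q assume p: "p \<in> ?A \<times> ?B" and q: "q \<in> ?A \<times> ?B" and "pick p = pick q"
    then have "fst (pick p) \<in> support_star V E (fst p) \<inter> support_star V E (fst q)"
      and "snd (pick p) \<in> support_star W F (snd p) \<inter> support_star W F (snd q)"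
      using pick[of "fst p" "snd p"] pick[of "fst q" "snd q"] by auto
    moreover have "strong_support_vertex V E (fst p)" "strong_support_vertex V E (fst q)"
      "strong_support_vertex W F (snd p)" "strong_support_vertex W F (snd q)"
      using p q by auto
    ultimately have "fst p = fst q" and "snd p = snd q"
      using support_star_disjoint[OF gV] support_star_disjoint[OF gW] by blast+
    then show "p = q" by (simp add: prod_eq_iff)
  qed
  moreover have "pick ` (?A \<times> ?B) \<subseteq> S" using pick by auto
  ultimately have "card (?A \<times> ?B) \<le> card S" using S(3) by (rule card_inj_on_le)
  then show ?thesis using S(2) unfolding num_strong_support_def by (simp add: card_cartesian_product)
qed

theorem corollary3p9:
  fixes V :: "'a set" and E :: "'a \<Rightarrow> 'a \<Rightarrow> bool"
    and W :: "'b set" and F :: "'b \<Rightarrow> 'b \<Rightarrow> bool"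
  assumes G: "connected_graph V E"
  shows "(power_domination_number V E = domination_number V E \<longrightarrow>
            (\<forall>n\<ge>1. power_domination_number (cart_V V (path_V n)) (cart_E E (path_E n))
                     = domination_number V E))
       \<and> (power_domination_number V E = zero_forcing_number V E \<and>
          connected_graph W F \<and> domination_number W F = 1 \<longrightarrow>
            power_domination_number (cart_V V W) (cart_E E F) = zero_forcing_number V E)
       \<and> (connected_graph W F \<and> num_strong_support V E = domination_number V E \<and>
          num_strong_support W F = zero_forcing_number W F \<longrightarrow>
            power_domination_number (cart_V V W) (cart_E E F)
              = domination_number V E * zero_forcing_number W F)"
proof (intro conjI impI allI)
  have gV: "graph V E" using G unfolding connected_graph_def by blast
  show "power_domination_number (cart_V V (path_V n)) (cart_E E (path_E n)) = domination_number V E"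
    if "power_domination_number V E = domination_number V E" and "1 \<le> n" for n
  proof -
    have "path_V n \<noteq> {}" using \<open>1 \<le> n\<close> by (simp add: path_V_def)
    moreover have "domination_number V E * zero_forcing_number (path_V n) (path_E n)
        \<le> domination_number V E"
      using mult_le_mono2[OF zero_forcing_number_path_le[OF \<open>1 \<le> n\<close>]] by simp
    ultimately show ?thesis
      using power_domination_number_cart_le_dom_zf[OF gV path_graph, of n]
        power_domination_number_le_cart[OF gV path_graph, of n] that(1)
      by linarith
  qed
  show "power_domination_number (cart_V V W) (cart_E E F) = zero_forcing_number V E"
    if "power_domination_number V E = zero_forcing_number V E \<and>
        connected_graph W F \<and> domination_number W F = 1"
  proof -
    have "graph W F" and "W \<noteq> {}" using that unfolding connected_graph_def by blast+
    then show ?thesis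
      using power_domination_number_cart_le_zf_dom[OF gV \<open>graph W F\<close>]
        power_domination_number_le_cart[OF gV \<open>graph W F\<close> \<open>W \<noteq> {}\<close>] that
      by simp
  qed
  show "power_domination_number (cart_V V W) (cart_E E F)
          = domination_number V E * zero_forcing_number W F"
    if "connected_graph W F \<and> num_strong_support V E = domination_number V E \<and>
        num_strong_support W F = zero_forcing_number W F"
  proof -
    have "graph W F" using that unfolding connected_graph_def by blast
    then show ?thesis
      using power_domination_number_cart_le_dom_zf[OF gV \<open>graph W F\<close>]
        num_strong_support_cart_le[OF gV \<open>graph W F\<close>] that
      by simp
  qed
qed

end
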